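(* Let $X,E$ be Banach spaces, $m\ge2$, and $A\in\mathcal{L}_s(^mX;E)$ a continuous symmetric $m$-linear map, with canonical extension $\tilde A\in\mathcal{L}(^mX'';E'')$. The following are equivalent: (i) $\tilde A$ is symmetric; (ii) $\tilde A$ is weak-star-to-weak-star continuous in each variable; (iii) $i_{E'}'\circ\tilde{\tilde A}=\tilde A\circ(i_{X'}'\times\cdots\times i_{X'}')$ on $X^{iv}\times\cdots\times X^{iv}$; (iv) $\tilde A$ is weak-star-to-weak-star continuous in the second variable; (v) the first two variables of $\tilde A$ commute, i.e. $\tilde A(z_1,z_2,z_3,\dots,z_m)=\tilde A(z_2,z_1,z_3,\dots,z_m)$ for all $z_1,\dots,z_m\in X''$.
   Context: For a continuous $m$-linear map $A:X\times\cdots\times X\to E$, its canonical (Aron–Berner) extension $\tilde A:X''\times\cdots\times X''\to E''$ is $\tilde A(z_1,\dots,z_m)=w^*\text{-}\lim_{\alpha_1}\cdots w^*\text{-}\lim_{\alpha_m}A(x_{\alpha_1},\dots,x_{\alpha_m})$, where $(x_{\alpha_i})\subseteq X$ are nets weak-star converging to $z_i$ and the limits are taken one variable at a time from right to left (values regarded in $E''$). $\tilde{\tilde A}:X^{iv}\times\cdots\times X^{iv}\to E^{iv}$ is the canonical extension of $\tilde A$ in the same way. $i_Y:Y\to Y''$ is the canonical embedding, so $i_{X'}':X^{iv}\to X''$ and $i_{E'}':E^{iv}\to E''$ are the transposes of $i_{X'}$, $i_{E'}$ (restriction maps). *)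

theory Defs
  imports "HOL-Analysis.Analysis"
begin

text \<open>Real Banach spaces are types of class banach; the (topological) dual of X
  is the type of bounded linear maps from X to real, so X'' is the dual of that, etc.
  An m-linear map X \<times> ... \<times> X \<rightarrow> E is modelled as a function on lists of
  length m.\<close>

type_synonym 'a dual = "'a \<Rightarrow>\<^sub>L real"
type_synonym 'a bidual = "('a \<Rightarrow>\<^sub>L real) \<Rightarrow>\<^sub>L real"

definition multilinear_on :: "nat \<Rightarrow> ('a::real_normed_vector list \<Rightarrow> 'e::real_normed_vector) \<Rightarrow> bool" where
  "multilinear_on m A \<longleftrightarrow>
     (\<forall>xs i. length xs = m \<longrightarrow> i < m \<longrightarrow> linear (\<lambda>x. A (xs[i := x])))"

definition bounded_mlin :: "nat \<Rightarrow> ('a::real_normed_vector list \<Rightarrow> 'e::real_normed_vector) \<Rightarrow> bool" where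
  "bounded_mlin m A \<longleftrightarrow>
     (\<exists>C. \<forall>xs. length xs = m \<longrightarrow> norm (A xs) \<le> C * prod_list (map norm xs))"

definition cont_mlin :: "nat \<Rightarrow> ('a::real_normed_vector list \<Rightarrow> 'e::real_normed_vector) \<Rightarrow> bool" where
  "cont_mlin m A \<longleftrightarrow> multilinear_on m A \<and> bounded_mlin m A"

definition symmetric_mlin :: "nat \<Rightarrow> ('a list \<Rightarrow> 'e) \<Rightarrow> bool" where
  "symmetric_mlin m A \<longleftrightarrow>
     (\<forall>xs ys. length xs = m \<longrightarrow> mset ys = mset xs \<longrightarrow> A ys = A xs)"

text \<open>Iterated weak-star limits, right to left, for a scalar form B:
  taking the limit of the last variable x_m \<rightarrow> z_m (weak-star) of
  B(x_1,...,x_{m-1},x_m) gives z_m(x \<mapsto> B(x_1,...,x_{m-1},x)) by the very definition of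
  weak-star convergence, and so on.\<close>
primrec ab_ext_scalar :: "('a::real_normed_vector list \<Rightarrow> real) \<Rightarrow> 'a bidual list \<Rightarrow> real" where
  "ab_ext_scalar B [] = B []"
| "ab_ext_scalar B (z # zs) =
     blinfun_apply z (Blinfun (\<lambda>x. ab_ext_scalar (\<lambda>ys. B (x # ys)) zs))"

definition ab_ext :: "('a::real_normed_vector list \<Rightarrow> 'e::real_normed_vector)
    \<Rightarrow> 'a bidual list \<Rightarrow> 'e bidual" where
  "ab_ext A zs = Blinfun (\<lambda>\<psi>. ab_ext_scalar (\<lambda>xs. blinfun_apply \<psi> (A xs)) zs)"

definition weak_star :: "'a::real_normed_vector bidual topology" where
  "weak_star = pullback_topology UNIV (\<lambda>z \<phi>. blinfun_apply z \<phi>)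
                 (product_topology (\<lambda>_. euclideanreal) UNIV)"

definition can_emb :: "'a::real_normed_vector \<Rightarrow> 'a bidual" where
  "can_emb y = Blinfun (\<lambda>\<phi>. blinfun_apply \<phi> y)"

text \<open>transpose of i_{Y'} : Y' \<rightarrow> Y''', i.e. the map Y^{iv} \<rightarrow> Y'', w \<mapsto> w \<circ> i_{Y'}\<close>
definition emb_transpose :: "'a::real_normed_vector bidual bidual \<Rightarrow> 'a bidual" where
  "emb_transpose w = Blinfun (\<lambda>\<phi>. blinfun_apply w (can_emb \<phi>))"

end

theory Submission
  imports Defs
begin

(* The extension is computed one variable at a time,
  A~(z_1, ..., z_m) = z_1(x_1 |-> z_2(x_2 |-> ... z_m(x_m |-> A(x_1, ..., x_m)))),
  so it is weak-star continuous in its first variable, and a canonical point i_X x in any slot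
  just fixes that argument of A. As A is symmetric, the first two variables of A~ therefore
  commute as soon as one of them is canonical.
  (v) implies (i) by induction on m: after fixing z_1, the symmetry of the remaining variables
  follows by moving a fixed canonical argument to the last slot.
  (i) gives (ii) by moving any variable to the first slot, and (iii) by evaluating the double
  extension slot by slot, each w in X^iv acting through its restriction i_{X'}'(w).
  (iv) gives (v) because two weak-star continuous functions of z_2 that agree on the weak-star
  dense image of X coincide; (iii) gives (v) because it forces the functional
  z_2 |-> A~(z_1, z_2, ...) on X'' to be weak-star continuous. *)

section \<open>Multilinear maps\<close>

lemma cont_mlin_linear:
  "cont_mlin m B \<Longrightarrow> length xs = m \<Longrightarrow> i < m \<Longrightarrow> linear (\<lambda>x. B (xs[i := x]))"
  unfolding cont_mlin_def multilinear_on_def by blast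

lemma cont_mlin_bound:
  assumes "cont_mlin m B"
  obtains C where "C \<ge> 0" "\<And>xs. length xs = m \<Longrightarrow> norm (B xs) \<le> C * prod_list (map norm xs)"
proof -
  from assms obtain C where C: "\<And>xs. length xs = m \<Longrightarrow> norm (B xs) \<le> C * prod_list (map norm xs)"
    unfolding cont_mlin_def bounded_mlin_def by blast
  have "norm (B xs) \<le> max C 0 * prod_list (map norm xs)" if "length xs = m" for xs
    by (rule order_trans[OF C[OF that]]) (intro mult_right_mono prod_list_nonneg; auto)
  then show thesis by (intro that[of "max C 0"]) auto
qed

lemma cont_mlin_Cons:
  assumes "cont_mlin (Suc m) B"
  shows "cont_mlin m (\<lambda>ys. B (x # ys))"
proof -
  obtain C where C: "\<And>xs. length xs = Suc m \<Longrightarrow> norm (B xs) \<le> C * prod_list (map norm xs)"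
    using assms by (metis cont_mlin_bound)
  have "multilinear_on m (\<lambda>ys. B (x # ys))"
    unfolding multilinear_on_def using cont_mlin_linear[OF assms, of "x # _" "Suc _"] by simp
  moreover have "norm (B (x # xs)) \<le> C * norm x * prod_list (map norm xs)" if "length xs = m" for xs
    using C[of "x # xs"] that by (simp add: mult.assoc)
  then have "bounded_mlin m (\<lambda>ys. B (x # ys))"
    unfolding bounded_mlin_def by blast
  ultimately show ?thesis unfolding cont_mlin_def by simp
qed

lemma cont_mlin_snoc:
  assumes "cont_mlin (Suc m) B"
  shows "cont_mlin m (\<lambda>ys. B (ys @ [x]))"
proof -
  obtain C where C: "\<And>xs. length xs = Suc m \<Longrightarrow> norm (B xs) \<le> C * prod_list (map norm xs)"
    using assms by (metis cont_mlin_bound)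
  have "linear (\<lambda>t. B (xs[i := t] @ [x]))" if "length xs = m" "i < m" for xs i
    using cont_mlin_linear[OF assms, of "xs @ [x]" i] that by (simp add: list_update_append)
  then have "multilinear_on m (\<lambda>ys. B (ys @ [x]))"
    unfolding multilinear_on_def by blast
  moreover have "norm (B (xs @ [x])) \<le> C * norm x * prod_list (map norm xs)" if "length xs = m" for xs
    using C[of "xs @ [x]"] that by (simp add: ac_simps)
  then have "bounded_mlin m (\<lambda>ys. B (ys @ [x]))"
    unfolding bounded_mlin_def by blast
  ultimately show ?thesis unfolding cont_mlin_def by simp
qed

lemma cont_mlin_compose:
  assumes "bounded_linear f" "cont_mlin m A"
  shows "cont_mlin m (\<lambda>xs. f (A xs))"
proof -
  interpret f: bounded_linear f by fact
  obtain K where K: "\<And>y. norm (f y) \<le> norm y * K" "K > 0"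
    using f.pos_bounded by blast
  obtain C where C: "\<And>xs. length xs = m \<Longrightarrow> norm (A xs) \<le> C * prod_list (map norm xs)"
    using assms(2) by (metis cont_mlin_bound)
  have "multilinear_on m (\<lambda>xs. f (A xs))"
    unfolding multilinear_on_def
    using linear_compose[OF cont_mlin_linear[OF assms(2)] f.linear] by (simp add: o_def)
  moreover have "norm (f (A xs)) \<le> K * C * prod_list (map norm xs)" if "length xs = m" for xs
  proof -
    have "norm (f (A xs)) \<le> norm (A xs) * K" by (rule K(1))
    also have "\<dots> \<le> C * prod_list (map norm xs) * K"
      using C[OF that] K(2) by (simp add: mult_right_mono)
    finally show ?thesis by (simp add: ac_simps)
  qed
  then have "bounded_mlin m (\<lambda>xs. f (A xs))"
    unfolding bounded_mlin_def by blast
  ultimately show ?thesis unfolding cont_mlin_def by simp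
qed

lemma bounded_linear_cont_mlin_Cons:
  assumes "cont_mlin (Suc m) B" "length ys = m"
  shows "bounded_linear (\<lambda>x. B (x # ys))"
proof -
  interpret linear "\<lambda>x. B (x # ys)"
    using cont_mlin_linear[OF assms(1), of "0 # ys" 0] assms(2) by simp
  obtain C where "\<And>xs. length xs = Suc m \<Longrightarrow> norm (B xs) \<le> C * prod_list (map norm xs)"
    using assms(1) by (metis cont_mlin_bound)
  then have "norm (B (x # ys)) \<le> norm x * (C * prod_list (map norm ys))" for x
    using assms(2) by (metis length_Cons list.simps(9) prod_list.Cons mult.left_commute)
  then show ?thesis by (intro bounded_linear_intro) (auto simp: add scale)
qed

lemma all_length_eq_Cons_Cons:
  assumes "2 \<le> m"
  shows "(\<forall>zs. length zs = m \<longrightarrow> P zs) \<longleftrightarrow> (\<forall>a b r. length r + 2 = m \<longrightarrow> P (a # b # r))"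
proof (intro iffI allI impI)
  fix zs :: "'a list" assume P: "\<forall>a b r. length r + 2 = m \<longrightarrow> P (a # b # r)" and zs: "length zs = m"
  then obtain a b r where "zs = a # b # r"
    using assms by (auto simp: numeral_2_eq_2 Suc_le_length_iff)
  then show "P zs" using P zs by simp
qed simp

lemma symmetric_mlinD:
  "symmetric_mlin m B \<Longrightarrow> length xs = m \<Longrightarrow> mset ys = mset xs \<Longrightarrow> B ys = B xs"
  unfolding symmetric_mlin_def by blast

lemma symmetric_mlin_Cons:
  "symmetric_mlin (Suc m) B \<Longrightarrow> symmetric_mlin m (\<lambda>ys. B (x # ys))"
  unfolding symmetric_mlin_def[of m] by (auto intro: symmetric_mlinD)

lemma symmetric_mlin_snoc:
  "symmetric_mlin (Suc m) B \<Longrightarrow> symmetric_mlin m (\<lambda>ys. B (ys @ [x]))"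
  unfolding symmetric_mlin_def[of m] by (auto intro: symmetric_mlinD)

lemma symmetric_mlin_compose:
  "symmetric_mlin m A \<Longrightarrow> symmetric_mlin m (\<lambda>xs. f (A xs))"
  unfolding symmetric_mlin_def by metis

lemma symmetric_mlin_if_swap_and_tail:
  assumes swap: "\<And>a b r. length r + 2 = m \<Longrightarrow> f (b # a # r) = f (a # b # r)"
    and tail: "\<And>a ys zs. length zs + 1 = m \<Longrightarrow> mset ys = mset zs \<Longrightarrow> f (a # ys) = f (a # zs)"
  shows "symmetric_mlin m f"
  unfolding symmetric_mlin_def
proof (intro allI impI)
  fix xs ys :: "'a list" assume len: "length xs = m" and perm: "mset ys = mset xs"
  show "f ys = f xs"
  proof (cases xs)
    case Nil then show ?thesis using perm by simp
  next
    case (Cons x xs')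
    then obtain y ys' where ys: "ys = y # ys'" using perm by (cases ys) auto
    show ?thesis
    proof (cases "y = x")
      case True
      then show ?thesis using tail[of xs' ys' x] len perm Cons ys by simp
    next
      case False
      then have "y \<in> set xs'" using perm ys Cons by (metis mset_eq_setD list.set_intros(1) set_ConsD)
      define r where "r = remove1 y xs'"
      have xs': "mset xs' = mset (y # r)" using \<open>y \<in> set xs'\<close> by (simp add: r_def)
      then have len_xs': "length xs' = Suc (length r)" by (metis mset_eq_length length_Cons)
      then have r: "length r + 2 = m" using len Cons by simp
      have ys': "mset ys' = mset (x # r)"
        using perm unfolding ys Cons by (simp add: xs' add_mset_commute[of x y])
      have "f xs = f (x # y # r)" using tail[of xs' "y # r" x] xs' len_xs' r Cons by simp
      also have "\<dots> = f (y # x # r)" using swap[OF r] by simp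
      also have "\<dots> = f ys" using tail[of "x # r" ys' y] ys' r ys by simp
      finally show ?thesis by simp
    qed
  qed
qed

section \<open>Bounded linear maps and the canonical embedding\<close>

lemma Blinfun_add:
  "bounded_linear f \<Longrightarrow> bounded_linear g \<Longrightarrow> Blinfun (\<lambda>x. f x + g x) = Blinfun f + Blinfun g"
  by (rule blinfun_eqI) (simp add: bounded_linear_Blinfun_apply bounded_linear_add plus_blinfun.rep_eq)

lemma Blinfun_scaleR:
  "bounded_linear f \<Longrightarrow> Blinfun (\<lambda>x. c *\<^sub>R f x) = c *\<^sub>R Blinfun f"
  by (rule blinfun_eqI)
    (simp add: bounded_linear_Blinfun_apply bounded_linear_const_scaleR scaleR_blinfun.rep_eq)

lemma can_emb_apply [simp]: "can_emb y \<phi> = \<phi> y"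
  unfolding can_emb_def by (simp add: bounded_linear_Blinfun_apply bounded_linear_apply_blinfun)

lemma bounded_linear_can_emb: "bounded_linear can_emb"
proof (rule bounded_linear_intro[where K=1])
  show "norm (can_emb x) \<le> norm x * 1" for x :: 'a
    by (rule norm_blinfun_bound) (simp_all, metis norm_blinfun mult.commute real_norm_def)
qed (auto intro!: blinfun_eqI simp: blinfun.add_right blinfun.scaleR_right plus_blinfun.rep_eq
    scaleR_blinfun.rep_eq)

lemma emb_transpose_apply [simp]: "emb_transpose w \<phi> = w (can_emb \<phi>)"
  unfolding emb_transpose_def
  by (simp add: bounded_linear_Blinfun_apply bounded_linear_compose[OF blinfun.bounded_linear_right bounded_linear_can_emb])

lemma emb_transpose_can_emb [simp]: "emb_transpose (can_emb z) = z"
  by (rule blinfun_eqI) simp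

section \<open>The Aron--Berner extension\<close>

lemma ab_ext_scalar_cong:
  "(\<And>xs. length xs = length zs \<Longrightarrow> B xs = B' xs) \<Longrightarrow> ab_ext_scalar B zs = ab_ext_scalar B' zs"
proof (induction zs arbitrary: B B')
  case (Cons z zs)
  have "(\<lambda>x. ab_ext_scalar (\<lambda>ys. B (x # ys)) zs) = (\<lambda>x. ab_ext_scalar (\<lambda>ys. B' (x # ys)) zs)"
    using Cons by (intro ext Cons.IH) auto
  then show ?case by simp
qed simp

lemma bounded_linear_ab_ext_scalar_Cons_from_tail:
  fixes B :: "'a::real_normed_vector list \<Rightarrow> real"
  assumes B: "cont_mlin (Suc (length zs)) B"
    and add: "\<And>B B'. cont_mlin (length zs) B \<Longrightarrow> cont_mlin (length zs) B' \<Longrightarrow>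
      ab_ext_scalar (\<lambda>xs. B xs + B' xs) zs = ab_ext_scalar B zs + ab_ext_scalar B' zs"
    and scale: "\<And>B c. cont_mlin (length zs) B \<Longrightarrow>
      ab_ext_scalar (\<lambda>xs. c * B xs) zs = c * ab_ext_scalar B zs"
    and bound: "\<And>B C. cont_mlin (length zs) B \<Longrightarrow> C \<ge> 0 \<Longrightarrow>
      (\<And>xs. length xs = length zs \<Longrightarrow> \<bar>B xs\<bar> \<le> C * prod_list (map norm xs)) \<Longrightarrow>
      \<bar>ab_ext_scalar B zs\<bar> \<le> C * prod_list (map norm zs)"
  shows "bounded_linear (\<lambda>x. ab_ext_scalar (\<lambda>ys. B (x # ys)) zs)"
proof -
  obtain C where C0: "C \<ge> 0"
    and C: "\<And>xs. length xs = Suc (length zs) \<Longrightarrow> \<bar>B xs\<bar> \<le> C * prod_list (map norm xs)"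
    using B by (auto elim: cont_mlin_bound)
  have lin: "linear (\<lambda>x. B (x # ys))" if "length ys = length zs" for ys
    using bounded_linear_cont_mlin_Cons[OF B that] by (rule bounded_linear.linear)
  show ?thesis
  proof (rule bounded_linear_intro[where K = "C * prod_list (map norm zs)"])
    fix x y :: 'a
    have "ab_ext_scalar (\<lambda>ys. B ((x + y) # ys)) zs = ab_ext_scalar (\<lambda>ys. B (x # ys) + B (y # ys)) zs"
      by (rule ab_ext_scalar_cong) (simp add: linear_add[OF lin])
    then show "ab_ext_scalar (\<lambda>ys. B ((x + y) # ys)) zs
        = ab_ext_scalar (\<lambda>ys. B (x # ys)) zs + ab_ext_scalar (\<lambda>ys. B (y # ys)) zs"
      using add[OF cont_mlin_Cons[OF B] cont_mlin_Cons[OF B]] by simp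
  next
    fix r and x :: 'a
    have "ab_ext_scalar (\<lambda>ys. B ((r *\<^sub>R x) # ys)) zs = ab_ext_scalar (\<lambda>ys. r * B (x # ys)) zs"
      by (rule ab_ext_scalar_cong) (simp add: linear_scale[OF lin])
    then show "ab_ext_scalar (\<lambda>ys. B ((r *\<^sub>R x) # ys)) zs = r *\<^sub>R ab_ext_scalar (\<lambda>ys. B (x # ys)) zs"
      using scale[OF cont_mlin_Cons[OF B]] by simp
  next
    fix x :: 'a
    have "\<bar>ab_ext_scalar (\<lambda>ys. B (x # ys)) zs\<bar> \<le> C * norm x * prod_list (map norm zs)"
    proof (rule bound[OF cont_mlin_Cons[OF B]])
      show "\<bar>B (x # xs)\<bar> \<le> C * norm x * prod_list (map norm xs)" if "length xs = length zs" for xs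
        using C[of "x # xs"] that by (simp add: mult.assoc)
    qed (simp add: C0)
    then show "norm (ab_ext_scalar (\<lambda>ys. B (x # ys)) zs) \<le> norm x * (C * prod_list (map norm zs))"
      by (simp add: ac_simps)
  qed
qed

(* The three properties are proved together: the Blinfun in ab_ext_scalar denotes the intended
  functional only once the induction hypothesis makes its argument bounded linear. *)
lemma ab_ext_scalar_linear_bounded:
  fixes B :: "'a::real_normed_vector list \<Rightarrow> real"
  assumes "cont_mlin (length zs) B"
  shows "(\<forall>B' :: 'a list \<Rightarrow> real. cont_mlin (length zs) B' \<longrightarrow>
           ab_ext_scalar (\<lambda>xs. B xs + B' xs) zs = ab_ext_scalar B zs + ab_ext_scalar B' zs)
    \<and> (\<forall>c. ab_ext_scalar (\<lambda>xs. c * B xs) zs = c * ab_ext_scalar B zs)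
    \<and> (\<forall>C\<ge>0. (\<forall>xs. length xs = length zs \<longrightarrow> \<bar>B xs\<bar> \<le> C * prod_list (map norm xs)) \<longrightarrow>
         \<bar>ab_ext_scalar B zs\<bar> \<le> C * prod_list (map norm zs))"
  using assms
proof (induction zs arbitrary: B)
  case Nil
  then show ?case by simp
next
  case (Cons z zs)
  let ?F = "\<lambda>B x. ab_ext_scalar (\<lambda>ys. B (x # ys)) zs"
  have bl: "bounded_linear (?F B)" if "cont_mlin (Suc (length zs)) B" for B
    using that by (rule bounded_linear_ab_ext_scalar_Cons_from_tail) (use Cons.IH in blast)+
  have B: "cont_mlin (Suc (length zs)) B" using Cons.prems by simp
  show ?case
  proof (intro conjI allI impI)
    fix B' :: "'a list \<Rightarrow> real" assume "cont_mlin (length (z # zs)) B'"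
    then have B': "cont_mlin (Suc (length zs)) B'" by simp
    have "?F (\<lambda>xs. B xs + B' xs) = (\<lambda>x. ?F B x + ?F B' x)"
      using Cons.IH[OF cont_mlin_Cons[OF B]] cont_mlin_Cons[OF B'] by blast
    then show "ab_ext_scalar (\<lambda>xs. B xs + B' xs) (z # zs)
        = ab_ext_scalar B (z # zs) + ab_ext_scalar B' (z # zs)"
      by (simp add: Blinfun_add[OF bl[OF B] bl[OF B']] blinfun.add_right)
  next
    fix c
    have "?F (\<lambda>xs. c * B xs) = (\<lambda>x. c *\<^sub>R ?F B x)"
      using Cons.IH[OF cont_mlin_Cons[OF B]] by simp
    then show "ab_ext_scalar (\<lambda>xs. c * B xs) (z # zs) = c * ab_ext_scalar B (z # zs)"
      by (simp add: Blinfun_scaleR[OF bl[OF B], of c, unfolded real_scaleR_def] blinfun.scaleR_right)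
  next
    fix C :: real assume C0: "C \<ge> 0"
      and C: "\<forall>xs. length xs = length (z # zs) \<longrightarrow> \<bar>B xs\<bar> \<le> C * prod_list (map norm xs)"
    have "norm (Blinfun (?F B)) \<le> C * prod_list (map norm zs)"
    proof (rule norm_blinfun_bound)
      fix x
      have "\<forall>xs. length xs = length zs \<longrightarrow> \<bar>B (x # xs)\<bar> \<le> C * norm x * prod_list (map norm xs)"
        using C by (metis length_Cons list.simps(9) prod_list.Cons mult.assoc)
      then have "\<bar>?F B x\<bar> \<le> C * norm x * prod_list (map norm zs)"
        using Cons.IH[OF cont_mlin_Cons[OF B]] C0 by simp
      then show "norm (Blinfun (?F B) x) \<le> C * prod_list (map norm zs) * norm x"
        by (simp add: bounded_linear_Blinfun_apply[OF bl[OF B]] ac_simps)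
    qed (use C0 in \<open>intro mult_nonneg_nonneg prod_list_nonneg; auto\<close>)
    then have "\<bar>z (Blinfun (?F B))\<bar> \<le> norm z * (C * prod_list (map norm zs))"
      using norm_blinfun[of z "Blinfun (?F B)"] by (simp add: order_trans mult_left_mono)
    then show "\<bar>ab_ext_scalar B (z # zs)\<bar> \<le> C * prod_list (map norm (z # zs))"
      by (simp add: ac_simps)
  qed
qed

lemma ab_ext_scalar_add:
  fixes B B' :: "'a::real_normed_vector list \<Rightarrow> real"
  shows "cont_mlin (length zs) B \<Longrightarrow> cont_mlin (length zs) B' \<Longrightarrow>
    ab_ext_scalar (\<lambda>xs. B xs + B' xs) zs = ab_ext_scalar B zs + ab_ext_scalar B' zs"
  using ab_ext_scalar_linear_bounded by blast

lemma ab_ext_scalar_scale: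
  fixes B :: "'a::real_normed_vector list \<Rightarrow> real"
  shows "cont_mlin (length zs) B \<Longrightarrow> ab_ext_scalar (\<lambda>xs. c * B xs) zs = c * ab_ext_scalar B zs"
  using ab_ext_scalar_linear_bounded by blast

lemma ab_ext_scalar_bound:
  fixes B :: "'a::real_normed_vector list \<Rightarrow> real"
  shows "cont_mlin (length zs) B \<Longrightarrow> C \<ge> 0 \<Longrightarrow>
    (\<And>xs. length xs = length zs \<Longrightarrow> \<bar>B xs\<bar> \<le> C * prod_list (map norm xs)) \<Longrightarrow>
    \<bar>ab_ext_scalar B zs\<bar> \<le> C * prod_list (map norm zs)"
  using ab_ext_scalar_linear_bounded by blast

lemma bounded_linear_ab_ext_scalar_Cons:
  fixes B :: "'a::real_normed_vector list \<Rightarrow> real"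
  shows "cont_mlin (Suc (length zs)) B \<Longrightarrow> bounded_linear (\<lambda>x. ab_ext_scalar (\<lambda>ys. B (x # ys)) zs)"
  by (rule bounded_linear_ab_ext_scalar_Cons_from_tail)
    (simp_all add: ab_ext_scalar_add ab_ext_scalar_scale ab_ext_scalar_bound)

lemma ab_ext_scalar_can_emb_Cons:
  fixes B :: "'a::real_normed_vector list \<Rightarrow> real"
  assumes "cont_mlin (Suc (length zs)) B"
  shows "ab_ext_scalar B (can_emb x # zs) = ab_ext_scalar (\<lambda>ys. B (x # ys)) zs"
  using bounded_linear_Blinfun_apply[OF bounded_linear_ab_ext_scalar_Cons[OF assms]] by simp

lemma ab_ext_scalar_map_can_emb:
  fixes B :: "'a::real_normed_vector list \<Rightarrow> real"
  shows "cont_mlin (length xs) B \<Longrightarrow> ab_ext_scalar B (map can_emb xs) = B xs"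
proof (induction xs arbitrary: B)
  case (Cons x xs)
  then show ?case
    using ab_ext_scalar_can_emb_Cons[of "map can_emb xs" B x] Cons.IH[OF cont_mlin_Cons] by simp
qed simp

lemma ab_ext_scalar_snoc_can_emb:
  fixes B :: "'a::real_normed_vector list \<Rightarrow> real"
  shows "cont_mlin (Suc (length zs)) B \<Longrightarrow>
    ab_ext_scalar B (zs @ [can_emb x]) = ab_ext_scalar (\<lambda>ys. B (ys @ [x])) zs"
proof (induction zs arbitrary: B)
  case Nil
  then show ?case using ab_ext_scalar_can_emb_Cons[of "[]" B x] by simp
next
  case (Cons z zs)
  then have "(\<lambda>y. ab_ext_scalar (\<lambda>ys. B (y # ys)) (zs @ [can_emb x]))
      = (\<lambda>y. ab_ext_scalar (\<lambda>ys. B (y # ys @ [x])) zs)"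
    by (simp add: cont_mlin_Cons)
  then show ?case by simp
qed

lemma ab_ext_scalar_swap_can_emb:
  fixes B :: "'a::real_normed_vector list \<Rightarrow> real"
  assumes B: "cont_mlin m B" and sym: "symmetric_mlin m B" and r: "length r + 2 = m"
  shows "ab_ext_scalar B (a # can_emb x # r) = ab_ext_scalar B (can_emb x # a # r)"
proof -
  have B': "cont_mlin (Suc (Suc (length r))) B" using B r by simp
  have "ab_ext_scalar (\<lambda>ys. B (y # ys)) (can_emb x # r) = ab_ext_scalar (\<lambda>ys. B (x # y # ys)) r" for y
  proof -
    have "ab_ext_scalar (\<lambda>ys. B (y # ys)) (can_emb x # r) = ab_ext_scalar (\<lambda>ys. B (y # x # ys)) r"
      using ab_ext_scalar_can_emb_Cons[OF cont_mlin_Cons[OF B']] .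
    also have "\<dots> = ab_ext_scalar (\<lambda>ys. B (x # y # ys)) r"
      by (rule ab_ext_scalar_cong) (use r in \<open>auto intro: symmetric_mlinD[OF sym]\<close>)
    finally show ?thesis .
  qed
  then show ?thesis
    using ab_ext_scalar_can_emb_Cons[of "a # r" B x] B' by simp
qed

lemma linear_ab_ext_scalar_update:
  fixes B :: "'a::real_normed_vector list \<Rightarrow> real"
  shows "cont_mlin (length zs) B \<Longrightarrow> i < length zs \<Longrightarrow>
    linear (\<lambda>z. ab_ext_scalar B (zs[i := z]))"
proof (induction zs arbitrary: B i)
  case (Cons z zs)
  then have B: "cont_mlin (Suc (length zs)) B" by simp
  show ?case
  proof (cases i)
    case 0
    then show ?thesis by (simp add: bounded_linear.linear[OF bounded_linear_apply_blinfun])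
  next
    case (Suc j)
    let ?g = "\<lambda>t y. ab_ext_scalar (\<lambda>ys. B (y # ys)) (zs[j := t])"
    have bl: "bounded_linear (?g t)" for t
      using bounded_linear_ab_ext_scalar_Cons[of "zs[j := t]" B] B by simp
    have lin: "linear (\<lambda>t. ?g t y)" for y
      using Cons.IH[OF cont_mlin_Cons[OF B]] Cons.prems Suc by simp
    have "linear (\<lambda>t. Blinfun (?g t))"
    proof
      show "Blinfun (?g (t1 + t2)) = Blinfun (?g t1) + Blinfun (?g t2)" for t1 t2
        using Blinfun_add[OF bl bl] linear_add[OF lin] by simp
      show "Blinfun (?g (c *\<^sub>R t)) = c *\<^sub>R Blinfun (?g t)" for c t
        using Blinfun_scaleR[OF bl] linear_scale[OF lin] by simp
    qed
    then show ?thesis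
      using Suc linear_compose[OF _ bounded_linear.linear[OF blinfun.bounded_linear_right]]
      by (simp add: o_def)
  qed
qed simp

lemma cont_mlin_ab_ext_scalar:
  fixes B :: "'a::real_normed_vector list \<Rightarrow> real"
  assumes "cont_mlin m B"
  shows "cont_mlin m (ab_ext_scalar B)"
proof -
  obtain C where "C \<ge> 0" "\<And>xs. length xs = m \<Longrightarrow> \<bar>B xs\<bar> \<le> C * prod_list (map norm xs)"
    using assms by (auto elim: cont_mlin_bound)
  then have "bounded_mlin m (ab_ext_scalar B)"
    using assms ab_ext_scalar_bound[of _ B C] unfolding bounded_mlin_def by auto
  moreover have "multilinear_on m (ab_ext_scalar B)"
    using assms linear_ab_ext_scalar_update unfolding multilinear_on_def by metis
  ultimately show ?thesis unfolding cont_mlin_def by simp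
qed

lemma ab_ext_scalar_compose_bound:
  fixes A :: "'a::real_normed_vector list \<Rightarrow> 'e::real_normed_vector" and \<psi> :: "'e dual"
  assumes A: "cont_mlin m A" and C0: "C \<ge> 0"
    and C: "\<And>xs. length xs = m \<Longrightarrow> norm (A xs) \<le> C * prod_list (map norm xs)"
    and zs: "length zs = m"
  shows "\<bar>ab_ext_scalar (\<lambda>xs. \<psi> (A xs)) zs\<bar> \<le> norm \<psi> * C * prod_list (map norm zs)"
proof (rule ab_ext_scalar_bound)
  show "cont_mlin (length zs) (\<lambda>xs. \<psi> (A xs))"
    using cont_mlin_compose[OF blinfun.bounded_linear_right A] zs by simp
  show "\<bar>\<psi> (A xs)\<bar> \<le> norm \<psi> * C * prod_list (map norm xs)" if "length xs = length zs" for xs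
    using norm_blinfun[of \<psi> "A xs"] mult_left_mono[OF C[of xs] norm_ge_zero[of \<psi>]] that zs
    by (simp add: mult.assoc)
qed (use C0 in simp)

lemma ab_ext_apply:
  fixes A :: "'a::real_normed_vector list \<Rightarrow> 'e::real_normed_vector" and \<psi> :: "'e dual"
  assumes A: "cont_mlin m A" and zs: "length zs = m"
  shows "ab_ext A zs \<psi> = ab_ext_scalar (\<lambda>xs. \<psi> (A xs)) zs"
proof -
  obtain C where C0: "C \<ge> 0"
    and C: "\<And>xs. length xs = m \<Longrightarrow> norm (A xs) \<le> C * prod_list (map norm xs)"
    using A by (metis cont_mlin_bound)
  have D: "cont_mlin (length zs) (\<lambda>xs. \<psi> (A xs))" for \<psi> :: "'e dual"
    using cont_mlin_compose[OF blinfun.bounded_linear_right A] zs by simp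
  have "bounded_linear (\<lambda>\<psi> :: 'e dual. ab_ext_scalar (\<lambda>xs. \<psi> (A xs)) zs)"
  proof (rule bounded_linear_intro[where K = "C * prod_list (map norm zs)"])
    show "ab_ext_scalar (\<lambda>xs. (\<psi>1 + \<psi>2) (A xs)) zs
        = ab_ext_scalar (\<lambda>xs. \<psi>1 (A xs)) zs + ab_ext_scalar (\<lambda>xs. \<psi>2 (A xs)) zs"
      for \<psi>1 \<psi>2 :: "'e dual"
      using ab_ext_scalar_add[OF D D] by (simp add: plus_blinfun.rep_eq)
    show "ab_ext_scalar (\<lambda>xs. (r *\<^sub>R \<psi>) (A xs)) zs = r *\<^sub>R ab_ext_scalar (\<lambda>xs. \<psi> (A xs)) zs"
      for r and \<psi> :: "'e dual"
      using ab_ext_scalar_scale[OF D] by (simp add: scaleR_blinfun.rep_eq)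
    show "norm (ab_ext_scalar (\<lambda>xs. \<psi> (A xs)) zs) \<le> norm \<psi> * (C * prod_list (map norm zs))"
      for \<psi> :: "'e dual"
      using ab_ext_scalar_compose_bound[OF A C0 C zs] by (simp add: mult.assoc)
  qed
  then show ?thesis unfolding ab_ext_def by (simp add: bounded_linear_Blinfun_apply)
qed

lemma cont_mlin_ab_ext:
  fixes A :: "'a::real_normed_vector list \<Rightarrow> 'e::real_normed_vector"
  assumes A: "cont_mlin m A"
  shows "cont_mlin m (ab_ext A)"
proof -
  obtain C where C0: "C \<ge> 0"
    and C: "\<And>xs. length xs = m \<Longrightarrow> norm (A xs) \<le> C * prod_list (map norm xs)"
    using A by (metis cont_mlin_bound)
  have "linear (\<lambda>t. ab_ext A (zs[i := t]))" if zs: "length zs = m" and i: "i < m" for zs i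
  proof -
    have lin: "linear (\<lambda>t. ab_ext_scalar (\<lambda>xs. \<psi> (A xs)) (zs[i := t]))" for \<psi> :: "'e dual"
      by (rule linear_ab_ext_scalar_update)
        (use cont_mlin_compose[OF blinfun.bounded_linear_right A] zs i in auto)
    show ?thesis
      by (rule linearI; rule blinfun_eqI)
        (simp_all add: ab_ext_apply[OF A] zs plus_blinfun.rep_eq scaleR_blinfun.rep_eq
          linear_add[OF lin] linear_scale[OF lin])
  qed
  then have "multilinear_on m (ab_ext A)"
    unfolding multilinear_on_def by blast
  moreover have "norm (ab_ext A zs) \<le> C * prod_list (map norm zs)" if "length zs = m" for zs
  proof (rule norm_blinfun_bound)
    show "norm (ab_ext A zs \<psi>) \<le> C * prod_list (map norm zs) * norm \<psi>" for \<psi>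
      using ab_ext_scalar_compose_bound[OF A C0 C that, of \<psi>] ab_ext_apply[OF A that]
      by (simp add: ac_simps)
  qed (use C0 in \<open>intro mult_nonneg_nonneg prod_list_nonneg; auto\<close>)
  then have "bounded_mlin m (ab_ext A)"
    unfolding bounded_mlin_def by blast
  ultimately show ?thesis unfolding cont_mlin_def by simp
qed

lemma ab_ext_eq_iff:
  fixes A :: "'a::real_normed_vector list \<Rightarrow> 'e::real_normed_vector"
  assumes "cont_mlin m A" "length zs = m" "length zs' = m"
  shows "ab_ext A zs = ab_ext A zs' \<longleftrightarrow>
    (\<forall>\<psi> :: 'e dual. ab_ext_scalar (\<lambda>xs. \<psi> (A xs)) zs = ab_ext_scalar (\<lambda>xs. \<psi> (A xs)) zs')"
proof -
  have "ab_ext A zs \<psi> = ab_ext_scalar (\<lambda>xs. \<psi> (A xs)) zs"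
    "ab_ext A zs' \<psi> = ab_ext_scalar (\<lambda>xs. \<psi> (A xs)) zs'" for \<psi>
    using assms by (simp_all add: ab_ext_apply)
  then show ?thesis by (auto intro: blinfun_eqI)
qed

lemma symmetric_mlin_ab_ext_iff:
  fixes A :: "'a::real_normed_vector list \<Rightarrow> 'e::real_normed_vector"
  assumes "cont_mlin m A"
  shows "symmetric_mlin m (ab_ext A) \<longleftrightarrow>
    (\<forall>\<psi> :: 'e dual. symmetric_mlin m (ab_ext_scalar (\<lambda>xs. \<psi> (A xs))))"
proof -
  have "ab_ext A ys = ab_ext A xs \<longleftrightarrow>
      (\<forall>\<psi> :: 'e dual. ab_ext_scalar (\<lambda>xs. \<psi> (A xs)) ys = ab_ext_scalar (\<lambda>xs. \<psi> (A xs)) xs)"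
    if "length xs = m" "mset ys = mset xs" for xs ys
    using ab_ext_eq_iff[OF assms, of ys xs] that mset_eq_length[OF that(2)] by simp
  then show ?thesis unfolding symmetric_mlin_def by blast
qed

lemma emb_transpose_ab_ext_ab_ext_apply:
  fixes A :: "'a::real_normed_vector list \<Rightarrow> 'e::real_normed_vector" and \<phi> :: "'e dual"
  assumes A: "cont_mlin m A" and ws: "length ws = m"
  shows "emb_transpose (ab_ext (ab_ext A) ws) \<phi> = ab_ext_scalar (ab_ext_scalar (\<lambda>xs. \<phi> (A xs))) ws"
proof -
  have "emb_transpose (ab_ext (ab_ext A) ws) \<phi> = ab_ext_scalar (\<lambda>zs. ab_ext A zs \<phi>) ws"
    using ab_ext_apply[OF cont_mlin_ab_ext[OF A] ws] by simp
  also have "\<dots> = ab_ext_scalar (ab_ext_scalar (\<lambda>xs. \<phi> (A xs))) ws"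
    by (rule ab_ext_scalar_cong) (simp add: ab_ext_apply[OF A] ws)
  finally show ?thesis .
qed

section \<open>The weak-star topology on the bidual\<close>

lemma topspace_weak_star [simp]: "topspace weak_star = UNIV"
  unfolding weak_star_def by (simp add: topspace_pullback_topology)

lemma continuous_map_weak_star_eval: "continuous_map weak_star euclideanreal (\<lambda>z. z \<phi>)"
proof -
  have "continuous_map weak_star euclideanreal ((\<lambda>p. p \<phi>) \<circ> blinfun_apply)"
    unfolding weak_star_def by (intro continuous_map_pullback continuous_map_product_projection) simp
  then show ?thesis by (simp add: o_def)
qed

lemma continuous_map_into_weak_star_iff:
  fixes g :: "'b \<Rightarrow> 'a::real_normed_vector bidual"
  shows "continuous_map T weak_star g \<longleftrightarrow> (\<forall>\<phi>. continuous_map T euclideanreal (\<lambda>t. g t \<phi>))"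
proof
  assume "continuous_map T weak_star g"
  then show "\<forall>\<phi>. continuous_map T euclideanreal (\<lambda>t. g t \<phi>)"
    using continuous_map_compose[OF _ continuous_map_weak_star_eval] by (auto simp: o_def)
next
  assume "\<forall>\<phi>. continuous_map T euclideanreal (\<lambda>t. g t \<phi>)"
  then show "continuous_map T weak_star g"
    unfolding weak_star_def
    by (intro continuous_map_pullback') (simp_all add: continuous_map_componentwise_UNIV o_def)
qed

lemma in_span_if_common_kernel:
  fixes F :: "'a::real_normed_vector dual set" and \<psi> :: "'a dual"
  assumes "finite F" and "\<And>x. (\<forall>\<phi>\<in>F. \<phi> x = 0) \<Longrightarrow> \<psi> x = 0"
  shows "\<psi> \<in> span F"
  using assms
proof (induction F arbitrary: \<psi> rule: finite_induct)
  case empty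
  then have "\<psi> = 0" by (intro blinfun_eqI) simp
  then show ?case by (simp add: span_zero)
next
  case (insert \<phi>0 F)
  show ?case
  proof (cases "\<exists>x0. (\<forall>\<phi>\<in>F. \<phi> x0 = 0) \<and> \<phi>0 x0 \<noteq> 0")
    case True
    then obtain x0 where x0F: "\<forall>\<phi>\<in>F. \<phi> x0 = 0" and x0: "\<phi>0 x0 \<noteq> 0" by blast
    define x1 where "x1 = inverse (\<phi>0 x0) *\<^sub>R x0"
    have x1F: "\<forall>\<phi>\<in>F. \<phi> x1 = 0" and x1: "\<phi>0 x1 = 1"
      using x0F x0 by (simp_all add: x1_def blinfun.scaleR_right)
    define \<psi>' where "\<psi>' = \<psi> - \<psi> x1 *\<^sub>R \<phi>0"
    have "\<psi>' x = 0" if "\<forall>\<phi>\<in>F. \<phi> x = 0" for x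
    proof -
      have "\<forall>\<phi>\<in>insert \<phi>0 F. \<phi> (x - \<phi>0 x *\<^sub>R x1) = 0"
        using that x1F x1 by (simp add: blinfun.diff_right blinfun.scaleR_right)
      then have "\<psi> (x - \<phi>0 x *\<^sub>R x1) = 0" using insert.prems by blast
      then show ?thesis
        by (simp add: \<psi>'_def blinfun.diff_right blinfun.scaleR_right minus_blinfun.rep_eq
            scaleR_blinfun.rep_eq)
    qed
    then have "\<psi>' \<in> span F" by (rule insert.IH)
    then have "\<psi>' \<in> span (insert \<phi>0 F)" by (meson span_mono subset_insertI subsetD)
    moreover have "\<psi> x1 *\<^sub>R \<phi>0 \<in> span (insert \<phi>0 F)"
      by (intro span_scale span_base) simp
    ultimately have "\<psi>' + \<psi> x1 *\<^sub>R \<phi>0 \<in> span (insert \<phi>0 F)"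
      by (rule span_add)
    then show ?thesis by (simp add: \<psi>'_def)
  next
    case False
    then have "\<psi> \<in> span F" using insert.prems by (intro insert.IH) auto
    then show ?thesis by (meson span_mono subset_insertI subsetD)
  qed
qed

lemma bidual_agrees_with_point_on_finite:
  fixes F :: "'a::real_normed_vector dual set" and z :: "'a bidual"
  assumes "finite F"
  shows "\<exists>x. \<forall>\<phi>\<in>F. (\<phi> :: 'a dual) x = z \<phi>"
  using assms
proof (induction F rule: finite_induct)
  case (insert \<phi>0 F)
  then obtain x where xF: "\<forall>\<phi>\<in>F. (\<phi> :: 'a dual) x = z \<phi>" by blast
  show ?case
  proof (cases "\<exists>x0. (\<forall>\<phi>\<in>F. \<phi> x0 = 0) \<and> \<phi>0 x0 \<noteq> 0")
    case True
    then obtain x0 where x0F: "\<forall>\<phi>\<in>F. \<phi> x0 = 0" and x0: "\<phi>0 x0 \<noteq> 0" by blast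
    define x' where "x' = x + ((z \<phi>0 - \<phi>0 x) / \<phi>0 x0) *\<^sub>R x0"
    have "\<forall>\<phi>\<in>insert \<phi>0 F. (\<phi> :: 'a dual) x' = z \<phi>"
      using xF x0F x0 by (simp add: x'_def blinfun.add_right blinfun.scaleR_right)
    then show ?thesis by blast
  next
    case False
    then have "\<phi>0 \<in> span F" using in_span_if_common_kernel[OF insert.hyps(1)] by blast
    have "z \<phi>0 = \<phi>0 x"
      by (rule linear_eq_on_span[OF _ _ _ \<open>\<phi>0 \<in> span F\<close>, of _ "\<lambda>\<phi>. \<phi> x"])
        (use xF in \<open>simp_all add: bounded_linear.linear[OF blinfun.bounded_linear_right]
          bounded_linear.linear[OF bounded_linear_apply_blinfun]\<close>)
    then show ?thesis using xF by auto
  qed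
qed simp

(* Goldstine-type density: a basic weak-star open set constrains only finitely many functionals. *)
lemma weak_star_open_meets_can_emb:
  fixes z :: "'a::real_normed_vector bidual"
  assumes "openin weak_star U" "z \<in> U"
  shows "\<exists>x. can_emb x \<in> U"
proof -
  obtain V where V: "openin (product_topology (\<lambda>_. euclideanreal) UNIV) V"
    and U: "U = blinfun_apply -` V"
    using assms(1) unfolding weak_star_def openin_pullback_topology by auto
  then obtain W where W: "finite {\<phi>. W \<phi> \<noteq> UNIV}" and zW: "blinfun_apply z \<in> Pi\<^sub>E UNIV W"
    and WV: "Pi\<^sub>E UNIV W \<subseteq> V"
    using assms(2) unfolding openin_product_topology_alt by force
  obtain x where "\<forall>\<phi>\<in>{\<phi>. W \<phi> \<noteq> UNIV}. (\<phi> :: 'a dual) x = z \<phi>"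
    using bidual_agrees_with_point_on_finite[OF W] by blast
  then have "blinfun_apply (can_emb x) \<in> Pi\<^sub>E UNIV W"
    using zW by (auto simp: PiE_iff) (metis UNIV_I)
  then show ?thesis using WV U by blast
qed

lemma weak_star_continuous_eq_if_eq_on_can_emb:
  fixes g h :: "'a::real_normed_vector bidual \<Rightarrow> real"
  assumes g: "continuous_map weak_star euclideanreal g" and h: "continuous_map weak_star euclideanreal h"
    and eq: "\<And>x. g (can_emb x) = h (can_emb x)"
  shows "g = h"
proof
  fix z
  have "openin weak_star {z. g z - h z \<noteq> 0}"
    using openin_continuous_map_preimage[OF continuous_map_diff[OF g h], of "- {0}"]
    by (simp add: open_Compl)
  then show "g z = h z"
    using weak_star_open_meets_can_emb[of "{z. g z - h z \<noteq> 0}" z] eq by auto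
qed

lemma can_emb_if_commutes_with_emb_transpose:
  fixes G :: "'a::real_normed_vector bidual dual"
  assumes G: "\<And>w. blinfun_apply w G = G (emb_transpose w)"
  shows "G = can_emb (Blinfun (\<lambda>x. G (can_emb x)))"
proof (rule blinfun_eqI)
  fix y :: "'a bidual"
  define J where "J = Blinfun (can_emb :: 'a \<Rightarrow> 'a bidual)"
  have J: "J x = can_emb x" for x
    unfolding J_def by (simp add: bounded_linear_Blinfun_apply[OF bounded_linear_can_emb])
  \<comment> \<open>W is annihilated by emb_transpose, so the hypothesis forces W G = 0\<close>
  define W where "W = Blinfun (\<lambda>H :: 'a bidual dual. blinfun_apply H y - y (H o\<^sub>L J))"
  have W: "W H = H y - y (H o\<^sub>L J)" for H :: "'a bidual dual"
    unfolding W_def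
    by (intro bounded_linear_Blinfun_apply[THEN fun_cong] bounded_linear_sub bounded_linear_apply_blinfun
        bounded_linear_compose[OF blinfun.bounded_linear_right]
        bounded_bilinear.bounded_linear_left[OF bounded_bilinear_blinfun_compose])
  have "can_emb \<phi> o\<^sub>L J = \<phi>" for \<phi> :: "'a dual"
    by (rule blinfun_eqI) (simp add: J)
  then have "emb_transpose W = 0"
    by (intro blinfun_eqI) (simp add: W)
  then have "W G = 0" using G by simp
  moreover have "G o\<^sub>L J = Blinfun (\<lambda>x. G (can_emb x))"
    by (rule blinfun_eqI) (simp add: J bounded_linear_Blinfun_apply
        bounded_linear_compose[OF blinfun.bounded_linear_right bounded_linear_can_emb])
  ultimately show "G y = can_emb (Blinfun (\<lambda>x. G (can_emb x))) y"
    by (simp add: W)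
qed

section \<open>Symmetry of the extension\<close>

lemma symmetric_ab_ext_scalar_if_swap:
  fixes B :: "'a::real_normed_vector list \<Rightarrow> real"
  assumes "cont_mlin m B" "symmetric_mlin m B"
    and "\<And>a b r. length r + 2 = m \<Longrightarrow> ab_ext_scalar B (b # a # r) = ab_ext_scalar B (a # b # r)"
  shows "symmetric_mlin m (ab_ext_scalar B)"
  using assms
proof (induction m arbitrary: B)
  case 0
  show ?case by (rule symmetric_mlin_if_swap_and_tail) simp_all
next
  case (Suc k)
  note B = Suc.prems(1) and sym = Suc.prems(2) and swap = Suc.prems(3)
  show ?case
  proof (rule symmetric_mlin_if_swap_and_tail)
    show "ab_ext_scalar B (b # a # r) = ab_ext_scalar B (a # b # r)" if "length r + 2 = Suc k" for a b r
      using swap that .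
  next
    fix a and ys zs :: "'a bidual list"
    assume zs: "length zs + 1 = Suc k" and perm: "mset ys = mset zs"
    have rotate: "ab_ext_scalar (\<lambda>l. B (x # l)) ws = ab_ext_scalar (\<lambda>l. B (l @ [x])) ws"
      if "length ws = k" for ws x
      by (rule ab_ext_scalar_cong) (use that in \<open>auto intro: symmetric_mlinD[OF sym]\<close>)
    \<comment> \<open>the fixed argument x is moved to the last slot, where it becomes the canonical point\<close>
    have snoc_sym: "symmetric_mlin k (ab_ext_scalar (\<lambda>l. B (l @ [x])))" for x
    proof (rule Suc.IH[OF cont_mlin_snoc[OF B] symmetric_mlin_snoc[OF sym]])
      fix a b r assume r: "length (r :: 'a bidual list) + 2 = k"
      have "ab_ext_scalar (\<lambda>l. B (l @ [x])) (b # a # r) = ab_ext_scalar B (b # a # r @ [can_emb x])"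
        using ab_ext_scalar_snoc_can_emb[of "b # a # r" B x] B r by simp
      also have "\<dots> = ab_ext_scalar B (a # b # r @ [can_emb x])"
        using swap[of "r @ [can_emb x]"] r by simp
      also have "\<dots> = ab_ext_scalar (\<lambda>l. B (l @ [x])) (a # b # r)"
        using ab_ext_scalar_snoc_can_emb[of "a # b # r" B x] B r by simp
      finally show "ab_ext_scalar (\<lambda>l. B (l @ [x])) (b # a # r)
          = ab_ext_scalar (\<lambda>l. B (l @ [x])) (a # b # r)" .
    qed
    have "ab_ext_scalar (\<lambda>l. B (x # l)) ys = ab_ext_scalar (\<lambda>l. B (x # l)) zs" for x
      using rotate zs perm mset_eq_length[OF perm] symmetric_mlinD[OF snoc_sym[of x], of zs ys]
      by simp
    then show "ab_ext_scalar B (a # ys) = ab_ext_scalar B (a # zs)" by simp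
  qed
qed

lemma symmetric_ab_ext_iff_swap:
  fixes A :: "'a::real_normed_vector list \<Rightarrow> 'e::real_normed_vector"
  assumes A: "cont_mlin m A" and sym: "symmetric_mlin m A"
  shows "symmetric_mlin m (ab_ext A) \<longleftrightarrow>
    (\<forall>a b r. length r + 2 = m \<longrightarrow> ab_ext A (b # a # r) = ab_ext A (a # b # r))"
proof
  assume "symmetric_mlin m (ab_ext A)"
  then show "\<forall>a b r. length r + 2 = m \<longrightarrow> ab_ext A (b # a # r) = ab_ext A (a # b # r)"
    by (auto intro: symmetric_mlinD)
next
  assume swap: "\<forall>a b r. length r + 2 = m \<longrightarrow> ab_ext A (b # a # r) = ab_ext A (a # b # r)"
  have "symmetric_mlin m (ab_ext_scalar (\<lambda>xs. \<psi> (A xs)))" for \<psi> :: "'e dual"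
  proof (rule symmetric_ab_ext_scalar_if_swap)
    show "cont_mlin m (\<lambda>xs. \<psi> (A xs))" by (rule cont_mlin_compose[OF blinfun.bounded_linear_right A])
    show "symmetric_mlin m (\<lambda>xs. \<psi> (A xs))" by (rule symmetric_mlin_compose[OF sym])
    show "ab_ext_scalar (\<lambda>xs. \<psi> (A xs)) (b # a # r) = ab_ext_scalar (\<lambda>xs. \<psi> (A xs)) (a # b # r)"
      if "length r + 2 = m" for a b r
      using ab_ext_eq_iff[OF A, of "b # a # r" "a # b # r"] swap that
      by (simp del: ab_ext_scalar.simps)
  qed
  then show "symmetric_mlin m (ab_ext A)"
    using symmetric_mlin_ab_ext_iff[OF A] by blast
qed

lemma continuous_map_ab_ext_Cons:
  fixes A :: "'a::real_normed_vector list \<Rightarrow> 'e::real_normed_vector"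
  assumes "cont_mlin (Suc (length r)) A"
  shows "continuous_map weak_star weak_star (\<lambda>z. ab_ext A (z # r))"
  unfolding continuous_map_into_weak_star_iff
  by (simp add: ab_ext_apply[OF assms] continuous_map_weak_star_eval)

lemma continuous_map_ab_ext_update_if_symmetric:
  fixes A :: "'a::real_normed_vector list \<Rightarrow> 'e::real_normed_vector"
  assumes A: "cont_mlin m A" and sym: "symmetric_mlin m (ab_ext A)" and zs: "length zs = m" and j: "j < m"
  shows "continuous_map weak_star weak_star (\<lambda>z. ab_ext A (zs[j := z]))"
proof -
  define r where "r = take j zs @ drop (Suc j) zs"
  have r: "Suc (length r) = m" using zs j by (simp add: r_def)
  have "ab_ext A (zs[j := z]) = ab_ext A (z # r)" for z
  proof (rule symmetric_mlinD[OF sym])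
    show "mset (zs[j := z]) = mset (z # r)"
      using zs j by (simp add: r_def upd_conv_take_nth_drop)
  qed (use r in simp)
  then show ?thesis
    using continuous_map_ab_ext_Cons[of r A] A r by simp
qed

lemma ab_ext_swap_if_continuous_second:
  fixes A :: "'a::real_normed_vector list \<Rightarrow> 'e::real_normed_vector"
  assumes A: "cont_mlin m A" and sym: "symmetric_mlin m A" and r: "length r + 2 = m"
    and cont: "continuous_map weak_star weak_star (\<lambda>z. ab_ext A (a # z # r))"
  shows "ab_ext A (b # a # r) = ab_ext A (a # b # r)"
proof (rule blinfun_eqI)
  fix \<psi> :: "'e dual"
  have len: "length (x # y # r) = m" for x y using r by simp
  have "(\<lambda>z. ab_ext A (z # a # r) \<psi>) = (\<lambda>z. ab_ext A (a # z # r) \<psi>)"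
  proof (rule weak_star_continuous_eq_if_eq_on_can_emb)
    show "continuous_map weak_star euclideanreal (\<lambda>z. ab_ext A (z # a # r) \<psi>)"
      using continuous_map_ab_ext_Cons[of "a # r" A] A r
      unfolding continuous_map_into_weak_star_iff by simp
    show "continuous_map weak_star euclideanreal (\<lambda>z. ab_ext A (a # z # r) \<psi>)"
      using cont unfolding continuous_map_into_weak_star_iff by blast
    show "ab_ext A (can_emb x # a # r) \<psi> = ab_ext A (a # can_emb x # r) \<psi>" for x
      using ab_ext_scalar_swap_can_emb[OF cont_mlin_compose[OF blinfun.bounded_linear_right[of \<psi>] A]
          symmetric_mlin_compose[OF sym] r, of a x]
      by (simp add: ab_ext_apply[OF A len] del: ab_ext_scalar.simps)
  qed
  then show "ab_ext A (b # a # r) \<psi> = ab_ext A (a # b # r) \<psi>"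
    by (rule fun_cong)
qed

lemma ab_ext_scalar_eq_emb_transpose:
  fixes D :: "'a::real_normed_vector bidual list \<Rightarrow> real"
  assumes "length ws = n" "cont_mlin n D" "symmetric_mlin n D"
    and "\<And>z zs. length zs + 1 = n \<Longrightarrow> D (z # zs) = z (Blinfun (\<lambda>x. D (can_emb x # zs)))"
  shows "ab_ext_scalar D ws = D (map emb_transpose ws)"
  using assms
proof (induction ws arbitrary: n D)
  case Nil
  show ?case by simp
next
  case (Cons w ws)
  obtain k where n: "n = Suc k" and ws: "length ws = k"
    using Cons.prems(1) by auto
  note D = Cons.prems(2)[unfolded n] and sym = Cons.prems(3)[unfolded n]
    and first = Cons.prems(4)[unfolded n]
  have swap: "D (u # v # zs) = D (v # u # zs)" if "length zs + 1 = k" for u v zs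
    using that by (intro symmetric_mlinD[OF sym]) auto
  let ?rs = "map emb_transpose ws"
  have IH: "ab_ext_scalar (\<lambda>l. D (y # l)) ws = D (y # ?rs)" for y
  proof (rule Cons.IH[OF ws cont_mlin_Cons[OF D] symmetric_mlin_Cons[OF sym]])
    fix z zs assume zs: "length (zs :: 'a bidual list) + 1 = k"
    have "D (y # z # zs) = D (z # y # zs)" by (rule swap[OF zs])
    also have "\<dots> = z (Blinfun (\<lambda>x. D (can_emb x # y # zs)))" by (rule first) (use zs in simp)
    also have "(\<lambda>x. D (can_emb x # y # zs)) = (\<lambda>x. D (y # can_emb x # zs))"
      by (intro ext swap[OF zs])
    finally show "D (y # z # zs) = z (Blinfun (\<lambda>x. D (y # can_emb x # zs)))" .
  qed
  have first_rs: "D (y # ?rs) = y (Blinfun (\<lambda>x. D (can_emb x # ?rs)))" for y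
    by (rule first) (use ws in simp)
  have "Blinfun (\<lambda>y. D (y # ?rs)) = can_emb (Blinfun (\<lambda>x. D (can_emb x # ?rs)))"
  proof (rule blinfun_eqI)
    have "bounded_linear (\<lambda>y. D (y # ?rs))"
      by (rule bounded_linear_cont_mlin_Cons[OF D]) (use ws in simp)
    then show "Blinfun (\<lambda>y. D (y # ?rs)) y = can_emb (Blinfun (\<lambda>x. D (can_emb x # ?rs))) y" for y
      by (simp only: bounded_linear_Blinfun_apply can_emb_apply) (rule first_rs)
  qed
  then have "ab_ext_scalar D (w # ws) = emb_transpose w (Blinfun (\<lambda>x. D (can_emb x # ?rs)))"
    using IH by simp
  also have "\<dots> = D (emb_transpose w # ?rs)"
    by (rule first_rs[symmetric])
  finally show ?case by simp
qed

lemma emb_transpose_ab_ext_ab_ext_if_symmetric: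
  fixes A :: "'a::real_normed_vector list \<Rightarrow> 'e::real_normed_vector"
  assumes A: "cont_mlin m A" and sym: "symmetric_mlin m (ab_ext A)" and ws: "length ws = m"
  shows "emb_transpose (ab_ext (ab_ext A) ws) = ab_ext A (map emb_transpose ws)"
proof (rule blinfun_eqI)
  fix \<phi> :: "'e dual"
  let ?B = "\<lambda>xs. \<phi> (A xs)"
  have B: "cont_mlin m ?B" by (rule cont_mlin_compose[OF blinfun.bounded_linear_right A])
  have "ab_ext_scalar (ab_ext_scalar ?B) ws = ab_ext_scalar ?B (map emb_transpose ws)"
  proof (rule ab_ext_scalar_eq_emb_transpose[OF ws cont_mlin_ab_ext_scalar[OF B]])
    show "symmetric_mlin m (ab_ext_scalar ?B)"
      using sym symmetric_mlin_ab_ext_iff[OF A] by blast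
    show "ab_ext_scalar ?B (z # zs) = z (Blinfun (\<lambda>x. ab_ext_scalar ?B (can_emb x # zs)))"
      if "length zs + 1 = m" for z zs
      using ab_ext_scalar_can_emb_Cons[of zs ?B] B that by simp
  qed
  then show "emb_transpose (ab_ext (ab_ext A) ws) \<phi> = ab_ext A (map emb_transpose ws) \<phi>"
    using emb_transpose_ab_ext_ab_ext_apply[OF A ws, of \<phi>] ab_ext_apply[OF A, of "map emb_transpose ws" \<phi>] ws
    by (simp del: emb_transpose_apply)
qed

lemma ab_ext_swap_if_emb_transpose_commutes:
  fixes A :: "'a::real_normed_vector list \<Rightarrow> 'e::real_normed_vector"
  assumes A: "cont_mlin m A" and sym: "symmetric_mlin m A" and r: "length r + 2 = m"
    and commutes: "\<And>ws. length ws = m \<Longrightarrow>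
      emb_transpose (ab_ext (ab_ext A) ws) = ab_ext A (map emb_transpose ws)"
  shows "ab_ext A (b # a # r) = ab_ext A (a # b # r)"
proof (rule blinfun_eqI)
  fix \<phi> :: "'e dual"
  let ?B = "\<lambda>xs. \<phi> (A xs)"
  let ?D = "ab_ext_scalar ?B"
  have B: "cont_mlin (Suc (Suc (length r))) ?B"
    using cont_mlin_compose[OF blinfun.bounded_linear_right A] r by simp
  have D: "cont_mlin (Suc (length r)) (\<lambda>ys. ?D (a # ys))"
    using cont_mlin_Cons[OF cont_mlin_ab_ext_scalar[OF B]] .
  define G where "G = Blinfun (\<lambda>y. ?D (a # y # r))"
  have G: "G y = ?D (a # y # r)" for y
    unfolding G_def using bounded_linear_cont_mlin_Cons[OF D]
    by (simp add: bounded_linear_Blinfun_apply)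
  have "blinfun_apply w G = G (emb_transpose w)" for w
  proof -
    have "w G = w (Blinfun (\<lambda>y. ab_ext_scalar (\<lambda>ys. ?D (a # y # ys)) (map can_emb r)))"
      using ab_ext_scalar_map_can_emb[OF cont_mlin_Cons[OF D]] by (simp add: G_def)
    also have "\<dots> = ab_ext_scalar ?D (can_emb a # w # map can_emb r)"
      using ab_ext_scalar_can_emb_Cons[of "w # map can_emb r" ?D a] cont_mlin_ab_ext_scalar[OF B]
      by simp
    also have "\<dots> = emb_transpose (ab_ext (ab_ext A) (can_emb a # w # map can_emb r)) \<phi>"
      by (rule emb_transpose_ab_ext_ab_ext_apply[OF A, symmetric]) (use r in simp)
    also have "\<dots> = ab_ext A (a # emb_transpose w # r) \<phi>"
      using r by (simp add: commutes o_def del: emb_transpose_apply)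
    also have "\<dots> = G (emb_transpose w)"
      using ab_ext_apply[OF A, of "a # emb_transpose w # r" \<phi>] r
      by (simp add: G del: ab_ext_scalar.simps)
    finally show ?thesis .
  qed
  then have "G = can_emb (Blinfun (\<lambda>x. G (can_emb x)))"
    by (rule can_emb_if_commutes_with_emb_transpose)
  then have "?D (a # b # r) = b (Blinfun (\<lambda>x. G (can_emb x)))"
    using arg_cong[of _ _ "\<lambda>H. H b"] G by simp
  also have "(\<lambda>x. G (can_emb x)) = (\<lambda>x. ?D (can_emb x # a # r))"
    using ab_ext_scalar_swap_can_emb[OF cont_mlin_compose[OF blinfun.bounded_linear_right A]
        symmetric_mlin_compose[OF sym] r]
    by (simp add: G)
  also have "b (Blinfun \<dots>) = ?D (b # a # r)"
    using ab_ext_scalar_can_emb_Cons[of "a # r" ?B] B by simp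
  finally show "ab_ext A (b # a # r) \<phi> = ab_ext A (a # b # r) \<phi>"
    using ab_ext_apply[OF A, of "a # b # r" \<phi>] ab_ext_apply[OF A, of "b # a # r" \<phi>] r
    by (simp del: ab_ext_scalar.simps)
qed

theorem theorem3p1:
  fixes A :: "'a::banach list \<Rightarrow> 'e::banach" and m :: nat
  assumes "m \<ge> 2"
    and "cont_mlin m A"
    and "symmetric_mlin m A"
  defines "At \<equiv> ab_ext A"
  defines "Att \<equiv> ab_ext (ab_ext A)"
  shows
    "let
       i   = symmetric_mlin m At;
       ii  = (\<forall>zs j. length zs = m \<longrightarrow> j < m \<longrightarrow>
                 continuous_map weak_star weak_star (\<lambda>z. At (zs[j := z])));
       iii = (\<forall>ws. length ws = m \<longrightarrow>
                 emb_transpose (Att ws) = At (map emb_transpose ws));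
       iv  = (\<forall>zs. length zs = m \<longrightarrow>
                 continuous_map weak_star weak_star (\<lambda>z. At (zs[1 := z])));
       v   = (\<forall>zs. length zs = m \<longrightarrow> At (zs ! 1 # zs ! 0 # drop 2 zs) = At zs)
     in (i \<longleftrightarrow> ii) \<and> (i \<longleftrightarrow> iii) \<and> (i \<longleftrightarrow> iv) \<and> (i \<longleftrightarrow> v)"
proof -
  note A = assms(2) and sym = assms(3)
  note Cons_Cons = all_length_eq_Cons_Cons[OF assms(1)]
  let ?swap = "\<forall>a b r. length r + 2 = m \<longrightarrow> ab_ext A (b # a # r) = ab_ext A (a # b # r)"
  have i_swap: "symmetric_mlin m (ab_ext A) \<longleftrightarrow> ?swap"
    by (rule symmetric_ab_ext_iff_swap[OF A sym])
  have v_swap: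
    "(\<forall>zs. length zs = m \<longrightarrow> ab_ext A (zs ! 1 # zs ! 0 # drop 2 zs) = ab_ext A zs) \<longleftrightarrow> ?swap"
    by (simp add: Cons_Cons)
  have i_ii: "symmetric_mlin m (ab_ext A) \<Longrightarrow> \<forall>zs j. length zs = m \<longrightarrow> j < m \<longrightarrow>
      continuous_map weak_star weak_star (\<lambda>z. ab_ext A (zs[j := z]))"
    by (simp add: continuous_map_ab_ext_update_if_symmetric[OF A])
  have ii_iv: "\<forall>zs j. length zs = m \<longrightarrow> j < m \<longrightarrow>
      continuous_map weak_star weak_star (\<lambda>z. ab_ext A (zs[j := z])) \<Longrightarrow>
    \<forall>zs. length zs = m \<longrightarrow> continuous_map weak_star weak_star (\<lambda>z. ab_ext A (zs[1 := z]))"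
    using assms(1) by simp
  have iv_swap: "\<forall>zs. length zs = m \<longrightarrow>
      continuous_map weak_star weak_star (\<lambda>z. ab_ext A (zs[1 := z])) \<Longrightarrow> ?swap"
    by (simp add: Cons_Cons ab_ext_swap_if_continuous_second[OF A sym])
  have i_iii: "symmetric_mlin m (ab_ext A) \<Longrightarrow>
      \<forall>ws. length ws = m \<longrightarrow> emb_transpose (ab_ext (ab_ext A) ws) = ab_ext A (map emb_transpose ws)"
    by (simp add: emb_transpose_ab_ext_ab_ext_if_symmetric[OF A])
  have iii_swap: "\<forall>ws. length ws = m \<longrightarrow>
      emb_transpose (ab_ext (ab_ext A) ws) = ab_ext A (map emb_transpose ws) \<Longrightarrow> ?swap"
    by (intro allI impI ab_ext_swap_if_emb_transpose_commutes[OF A sym]) simp_all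
  show ?thesis
    unfolding At_def Att_def Let_def
    using i_swap v_swap i_ii ii_iv iv_swap i_iii iii_swap by blast
qed

end
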